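(* Let $f_1,\dots,f_\Lambda$ be candidate models, $\mathcal L:\{f_\lambda\}_{\lambda=1}^\Lambda\to\mathbb R$ a performance metric, $U:(0,1)\to\mathbb R_+$, and fix $\delta\in(0,1)$. Suppose the pairwise comparison subroutine $\mathcal A$ satisfies: for any two models $h_1,h_2\in\{f_\lambda\}_{\lambda=1}^\Lambda$, its output $\widehat h\in\{h_1,h_2\}$ satisfies \[ \mathbb P\big(\mathcal L(\widehat h)-\min\{\mathcal L(h_1),\mathcal L(h_2)\}\le U(\delta)\big)\ge1-\delta. \] Then the output $\widehat f$ of the tournament procedure (context) run with $\mathcal A$ satisfies \[ \mathbb P\Big(\mathcal L(\widehat f)-\min_{\lambda\in[\Lambda]}\mathcal L(f_\lambda)\le2U(\delta)\Big)\ge1-\Lambda^2\delta. \]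
   Context: Tournament procedure (ATOMS): $S=\{f_1,\dots,f_\Lambda\}$; while $|S|>1$: choose a pivot $f\in S$ uniformly at random; let $S'=\{f'\in S\setminus\{f\}:\mathcal A(f,f')=f'\}$, where $\mathcal A(f,f')\in\{f,f'\}$ is the model output by $\mathcal A$ on the pair; if $S'=\emptyset$ output $f$, otherwise set $S\leftarrow S'$. If $|S|=1$, output its unique element. *)

theory Defs
  imports "HOL-Probability.Probability"
begin

text \<open>The tournament procedure (ATOMS) on a set S of model indices.
  piv S is the pivot chosen from S, and A i j is the index output by the
  pairwise comparison subroutine on the pair (model i, model j), i being the pivot.
  The first argument is fuel; with fuel at least card S the fuel is never exhausted
  (each round removes the pivot), so atoms (card S) piv A S is the procedure.\<close>

fun atoms :: "nat \<Rightarrow> (nat set \<Rightarrow> nat) \<Rightarrow> (nat \<Rightarrow> nat \<Rightarrow> nat) \<Rightarrow> nat set \<Rightarrow> nat" where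
  "atoms 0 piv A S = piv S"
| "atoms (Suc n) piv A S =
     (if card S = 1 then the_elem S
      else (let f = piv S; S' = {g \<in> S - {f}. A f g = g}
            in if S' = {} then f else atoms n piv A S'))"

end

theory Submission
  imports Defs
begin

text \<open>Suppose every comparison is U-accurate and let b be a best model. The tournament keeps the
  invariant "b is still a candidate, or every candidate is within 2U of L b": if b is eliminated
  in a round with pivot p, then p beat b, so L p \<le> L b + U, and every survivor of the round beat p,
  so it is within U of L p. Hence the output is within 2U of the optimum. Accuracy of all
  \<Lambda>^2 ordered pairs fails with probability at most \<Lambda>^2 \<delta> by a union bound.\<close>

definition survivors :: "(nat \<Rightarrow> nat \<Rightarrow> nat) \<Rightarrow> nat \<Rightarrow> nat set \<Rightarrow> nat set" where
  "survivors A p S = {x \<in> S - {p}. A p x = x}"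

definition cmp_accurate :: "nat set \<Rightarrow> (nat \<Rightarrow> real) \<Rightarrow> real \<Rightarrow> (nat \<Rightarrow> nat \<Rightarrow> nat) \<Rightarrow> bool" where
  "cmp_accurate D g u A \<longleftrightarrow> (\<forall>i\<in>D. \<forall>j\<in>D. g (A i j) - min (g i) (g j) \<le> u)"

lemma atoms_singleton [simp]: "atoms (Suc n) piv A {x} = x"
  by simp

lemma atoms_Suc_not_singleton:
  "card S \<noteq> 1 \<Longrightarrow> atoms (Suc n) piv A S =
     (if survivors A (piv S) S = {} then piv S else atoms n piv A (survivors A (piv S) S))"
  by (auto simp: survivors_def Let_def)

declare atoms.simps(2) [simp del]

lemma survivors_subset: "survivors A p S \<subseteq> S - {p}"
  by (auto simp: survivors_def)

lemma card_survivors_less: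
  assumes "finite S" "p \<in> S"
  shows "card (survivors A p S) < card S"
proof (rule psubset_card_mono[OF assms(1)])
  show "survivors A p S \<subset> S" using assms(2) by (auto simp: survivors_def)
qed

lemma survivors_near_min:
  assumes acc: "cmp_accurate D g u A"
    and "A p b \<in> {p, b}" and "S \<subseteq> D" "p \<in> S" "b \<in> S" "b \<notin> survivors A p S"
    and bmin: "\<forall>k\<in>D. g b \<le> g k" and "u \<ge> 0"
  shows "g p \<le> g b + u"
    and "x \<in> survivors A p S \<Longrightarrow> g x \<le> g b + 2 * u"
proof -
  have pD: "p \<in> D" and bD: "b \<in> D" using assms by auto
  show pivot: "g p \<le> g b + u"
  proof (cases "b = p")
    case False
    then have "A p b = p" using assms(2,5,6) by (auto simp: survivors_def)
    then have "g p - min (g p) (g b) \<le> u" using acc pD bD by (force simp: cmp_accurate_def)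
    then show ?thesis using bmin pD by (auto simp: min_def split: if_splits)
  qed (use \<open>u \<ge> 0\<close> in simp)
  assume x: "x \<in> survivors A p S"
  then have "x \<in> D" "A p x = x" using assms(3) by (auto simp: survivors_def)
  then have "g x - min (g p) (g x) \<le> u" using acc pD by (force simp: cmp_accurate_def)
  then show "g x \<le> g b + 2 * u" using pivot by (auto simp: min_def split: if_splits)
qed

lemma atoms_near_min:
  assumes piv_in: "\<And>S. S \<subseteq> D \<Longrightarrow> S \<noteq> {} \<Longrightarrow> piv S \<in> S"
    and out: "\<And>i j. i \<in> D \<Longrightarrow> j \<in> D \<Longrightarrow> A i j \<in> {i, j}"
    and acc: "cmp_accurate D g u A" and "u \<ge> 0"
    and bmin: "\<forall>k\<in>D. g b \<le> g k"
  shows "S \<subseteq> D \<Longrightarrow> finite S \<Longrightarrow> S \<noteq> {} \<Longrightarrow> card S \<le> n \<Longrightarrow>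
         b \<in> S \<or> (\<forall>x\<in>S. g x \<le> g b + 2 * u) \<Longrightarrow> g (atoms n piv A S) \<le> g b + 2 * u"
proof (induction n arbitrary: S)
  case 0
  then show ?case by simp
next
  case (Suc n)
  show ?case
  proof (cases "card S = 1")
    case True
    then obtain x where "S = {x}" by (rule card_1_singletonE)
    then show ?thesis using Suc.prems \<open>u \<ge> 0\<close> by auto
  next
    case not_singleton: False
    define p where "p = piv S"
    define S' where "S' = survivors A p S"
    have p: "p \<in> S" using piv_in Suc.prems by (simp add: p_def)
    have near_min: "g p \<le> g b + 2 * u \<and> (\<forall>x\<in>S'. g x \<le> g b + 2 * u)"
      if "b \<in> S" "b \<notin> S'"
    proof -
      have "A p b \<in> {p, b}" using Suc.prems(1) p that(1) by (intro out) auto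
      from survivors_near_min[OF acc this Suc.prems(1) p that(1) that(2)[unfolded S'_def] bmin \<open>u \<ge> 0\<close>]
      show ?thesis using \<open>u \<ge> 0\<close> by (auto simp: S'_def)
    qed
    show ?thesis
    proof (cases "S' = {}")
      case True
      have "g p \<le> g b + 2 * u" using near_min Suc.prems(5) p True by blast
      then show ?thesis using True by (simp add: atoms_Suc_not_singleton[OF not_singleton] S'_def p_def)
    next
      case S'_ne: False
      have S'_sub: "S' \<subseteq> S" using survivors_subset[of A p S] by (auto simp: S'_def)
      have "S' \<subseteq> D" using S'_sub Suc.prems(1) by (rule subset_trans)
      moreover have "finite S'" using Suc.prems(2) S'_sub by (rule rev_finite_subset)
      moreover note S'_ne
      moreover have "card S' \<le> n"
        using card_survivors_less[OF Suc.prems(2) p, of A] Suc.prems(4) by (simp add: S'_def)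
      moreover have "b \<in> S' \<or> (\<forall>x\<in>S'. g x \<le> g b + 2 * u)"
        using near_min Suc.prems(5) S'_sub by blast
      ultimately have "g (atoms n piv A S') \<le> g b + 2 * u" by (rule Suc.IH)
      then show ?thesis using S'_ne by (simp add: atoms_Suc_not_singleton[OF not_singleton] S'_def p_def)
    qed
  qed
qed

lemma measurable_Collect_finite_set:
  assumes "finite S" and "\<And>x. x \<in> S \<Longrightarrow> {\<omega> \<in> space M. P x \<omega>} \<in> sets M"
  shows "(\<lambda>\<omega>. {x \<in> S. P x \<omega>}) \<in> M \<rightarrow>\<^sub>M count_space (Pow S)"
  unfolding measurable_count_space_eq2[OF finite_Pow_iff[THEN iffD2, OF \<open>finite S\<close>]]
proof (intro conjI ballI)
  fix T assume "T \<in> Pow S"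
  then have "(\<lambda>\<omega>. {x \<in> S. P x \<omega>}) -` {T} \<inter> space M = {\<omega> \<in> space M. \<forall>x\<in>S. P x \<omega> \<longleftrightarrow> x \<in> T}"
    by blast
  also have "\<dots> \<in> sets M"
  proof (intro sets.sets_Collect_finite_All \<open>finite S\<close>)
    fix x assume "x \<in> S"
    then have "{\<omega> \<in> space M. P x \<omega>} \<in> sets M" by (rule assms(2))
    then show "{\<omega> \<in> space M. P x \<omega> \<longleftrightarrow> x \<in> T} \<in> sets M"
      by (cases "x \<in> T") (simp_all add: sets.sets_Collect_neg)
  qed
  finally show "(\<lambda>\<omega>. {x \<in> S. P x \<omega>}) -` {T} \<inter> space M \<in> sets M" .
qed auto

lemma measurable_survivors:
  assumes "finite S" and "\<And>x. x \<in> S \<Longrightarrow> cmp p x \<in> M \<rightarrow>\<^sub>M count_space UNIV"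
  shows "(\<lambda>\<omega>. survivors (\<lambda>i j. cmp i j \<omega>) p S) \<in> M \<rightarrow>\<^sub>M count_space (Pow (S - {p}))"
  unfolding survivors_def using assms
  by (intro measurable_Collect_finite_set) (auto intro: measurable_sets_Collect)

lemma measurable_atoms:
  assumes "finite D"
    and piv_meas: "\<And>S. S \<subseteq> D \<Longrightarrow> S \<noteq> {} \<Longrightarrow> piv S \<in> M \<rightarrow>\<^sub>M count_space UNIV"
    and piv_in: "\<And>S \<omega>. S \<subseteq> D \<Longrightarrow> S \<noteq> {} \<Longrightarrow> piv S \<omega> \<in> S"
    and cmp_meas: "\<And>i j. i \<in> D \<Longrightarrow> j \<in> D \<Longrightarrow> cmp i j \<in> M \<rightarrow>\<^sub>M count_space UNIV"
  shows "S \<subseteq> D \<Longrightarrow> S \<noteq> {} \<Longrightarrow>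
    (\<lambda>\<omega>. atoms n (\<lambda>S. piv S \<omega>) (\<lambda>i j. cmp i j \<omega>) S) \<in> M \<rightarrow>\<^sub>M count_space UNIV"
proof (induction n arbitrary: S)
  case 0
  then show ?case using piv_meas by simp
next
  case (Suc n)
  have "finite S" using \<open>finite D\<close> Suc.prems(1) by (rule rev_finite_subset)
  show ?case
  proof (cases "card S = 1")
    case True
    then obtain x where "S = {x}" by (rule card_1_singletonE)
    then show ?thesis by simp
  next
    case False
    define next_round where "next_round p T \<omega> =
      (if T = {} then p else atoms n (\<lambda>S. piv S \<omega>) (\<lambda>i j. cmp i j \<omega>) T)" for p T \<omega>
    have next_round_meas:
      "(\<lambda>\<omega>. next_round p (survivors (\<lambda>i j. cmp i j \<omega>) p S) \<omega>) \<in> M \<rightarrow>\<^sub>M count_space UNIV"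
      if "p \<in> S" for p
    proof -
      have "next_round p T \<in> M \<rightarrow>\<^sub>M count_space UNIV" if "T \<in> Pow (S - {p})" for T
        using that Suc.prems(1) Suc.IH[of T] by (cases "T = {}") (auto simp: next_round_def[abs_def])
      moreover have "(\<lambda>\<omega>. survivors (\<lambda>i j. cmp i j \<omega>) p S) \<in> M \<rightarrow>\<^sub>M count_space (Pow (S - {p}))"
        using that Suc.prems(1) by (intro measurable_survivors \<open>finite S\<close> cmp_meas) auto
      ultimately show ?thesis
        by (rule measurable_compose_countable'[where f = "next_round p"])
          (use \<open>finite S\<close> in \<open>auto intro: countable_finite\<close>)
    qed
    have piv_S: "piv S \<in> M \<rightarrow>\<^sub>M count_space S"
      using measurable_restrict_space2[OF _ piv_meas[OF Suc.prems], of S] piv_in[OF Suc.prems]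
      by (simp add: restrict_count_space)
    have "(\<lambda>\<omega>. next_round (piv S \<omega>) (survivors (\<lambda>i j. cmp i j \<omega>) (piv S \<omega>) S) \<omega>)
        \<in> M \<rightarrow>\<^sub>M count_space UNIV"
      using \<open>finite S\<close> by (intro measurable_compose_countable'[OF next_round_meas piv_S] countable_finite)
    then show ?thesis by (simp add: atoms_Suc_not_singleton[OF False] next_round_def)
  qed
qed

lemma (in prob_space) prob_finite_Ball_ge:
  fixes \<delta> :: real
  assumes "finite I"
    and events: "\<And>i. i \<in> I \<Longrightarrow> {\<omega> \<in> space M. P i \<omega>} \<in> events"
    and prob_ge: "\<And>i. i \<in> I \<Longrightarrow> prob {\<omega> \<in> space M. P i \<omega>} \<ge> 1 - \<delta>"
  shows "prob {\<omega> \<in> space M. \<forall>i\<in>I. P i \<omega>} \<ge> 1 - card I * \<delta>"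
proof -
  define bad where "bad i = space M - {\<omega> \<in> space M. P i \<omega>}" for i
  have bad_events: "bad i \<in> events" if "i \<in> I" for i
    using events[OF that] by (auto simp: bad_def)
  have "prob (\<Union>i\<in>I. bad i) \<le> (\<Sum>i\<in>I. prob (bad i))"
    using bad_events \<open>finite I\<close> by (intro finite_measure_subadditive_finite) auto
  also have "\<dots> \<le> (\<Sum>i\<in>I. \<delta>)"
  proof (rule sum_mono)
    fix i assume "i \<in> I"
    then show "prob (bad i) \<le> \<delta>"
      using prob_ge[OF \<open>i \<in> I\<close>] prob_compl[OF events[OF \<open>i \<in> I\<close>]] by (simp add: bad_def)
  qed
  finally have "prob (\<Union>i\<in>I. bad i) \<le> card I * \<delta>" by simp
  moreover have "{\<omega> \<in> space M. \<forall>i\<in>I. P i \<omega>} = space M - (\<Union>i\<in>I. bad i)"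
    by (auto simp: bad_def)
  moreover have "(\<Union>i\<in>I. bad i) \<in> events"
    using bad_events \<open>finite I\<close> by (intro sets.finite_UN) auto
  ultimately show ?thesis using prob_compl by simp
qed

lemma (in prob_space) prob_cmp_accurate_ge:
  fixes \<delta> :: real
  assumes "finite D"
    and cmp_meas: "\<And>i j. i \<in> D \<Longrightarrow> j \<in> D \<Longrightarrow> cmp i j \<in> M \<rightarrow>\<^sub>M count_space UNIV"
    and cmp_guarantee: "\<And>i j. i \<in> D \<Longrightarrow> j \<in> D \<Longrightarrow>
          prob {\<omega> \<in> space M. g (cmp i j \<omega>) - min (g i) (g j) \<le> u} \<ge> 1 - \<delta>"
  shows "prob {\<omega> \<in> space M. cmp_accurate D g u (\<lambda>i j. cmp i j \<omega>)} \<ge> 1 - real (card D) ^ 2 * \<delta>"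
proof -
  have events: "{\<omega> \<in> space M. g (cmp i j \<omega>) - min (g i) (g j) \<le> u} \<in> events"
    if "i \<in> D" "j \<in> D" for i j
    using cmp_meas[OF that] by (rule measurable_sets_Collect) simp
  have "1 - real (card (D \<times> D)) * \<delta>
      \<le> prob {\<omega> \<in> space M. \<forall>(i, j)\<in>D \<times> D. g (cmp i j \<omega>) - min (g i) (g j) \<le> u}"
    by (rule prob_finite_Ball_ge) (use \<open>finite D\<close> in \<open>auto simp: events cmp_guarantee\<close>)
  then show ?thesis by (simp add: cmp_accurate_def card_cartesian_product power2_eq_square)
qed

theorem mainTheorem11:
  fixes M :: "'w measure"
    and \<Lambda> :: nat
    and f :: "nat \<Rightarrow> 'm"
    and L :: "'m \<Rightarrow> real"
    and U :: "real \<Rightarrow> real"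
    and \<delta> :: real
    and cmp :: "nat \<Rightarrow> nat \<Rightarrow> 'w \<Rightarrow> nat"
    and piv :: "nat set \<Rightarrow> 'w \<Rightarrow> nat"
  assumes "prob_space M"
    and "\<Lambda> \<ge> 1"
    and "\<forall>x\<in>{0<..<1}. U x \<ge> 0"
    and "0 < \<delta>" and "\<delta> < 1"
    and cmp_meas: "\<And>i j. i \<in> {1..\<Lambda>} \<Longrightarrow> j \<in> {1..\<Lambda>} \<Longrightarrow>
                    cmp i j \<in> measurable M (count_space UNIV)"
    and cmp_out: "\<And>i j \<omega>. i \<in> {1..\<Lambda>} \<Longrightarrow> j \<in> {1..\<Lambda>} \<Longrightarrow> cmp i j \<omega> \<in> {i, j}"
    and cmp_guarantee: "\<And>i j. i \<in> {1..\<Lambda>} \<Longrightarrow> j \<in> {1..\<Lambda>} \<Longrightarrow>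
          measure M {\<omega> \<in> space M. L (f (cmp i j \<omega>)) - min (L (f i)) (L (f j)) \<le> U \<delta>} \<ge> 1 - \<delta>"
    and piv_meas: "\<And>S. S \<subseteq> {1..\<Lambda>} \<Longrightarrow> S \<noteq> {} \<Longrightarrow>
                    piv S \<in> measurable M (count_space UNIV)"
    and piv_in: "\<And>S \<omega>. S \<subseteq> {1..\<Lambda>} \<Longrightarrow> S \<noteq> {} \<Longrightarrow> piv S \<omega> \<in> S"
    and piv_unif: "\<And>S i. S \<subseteq> {1..\<Lambda>} \<Longrightarrow> S \<noteq> {} \<Longrightarrow> i \<in> S \<Longrightarrow>
                    measure M {\<omega> \<in> space M. piv S \<omega> = i} = 1 / real (card S)"
  shows "measure M {\<omega> \<in> space M.
            L (f (atoms \<Lambda> (\<lambda>S. piv S \<omega>) (\<lambda>i j. cmp i j \<omega>) {1..\<Lambda>}))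
              - Min ((\<lambda>k. L (f k)) ` {1..\<Lambda>}) \<le> 2 * U \<delta>}
         \<ge> 1 - real \<Lambda> ^ 2 * \<delta>"
proof -
  interpret prob_space M by fact
  let ?D = "{1..\<Lambda>}" and ?g = "\<lambda>k. L (f k)"
  let ?out = "\<lambda>\<omega>. atoms \<Lambda> (\<lambda>S. piv S \<omega>) (\<lambda>i j. cmp i j \<omega>) ?D"
  let ?good = "{\<omega> \<in> space M. cmp_accurate ?D ?g (U \<delta>) (\<lambda>i j. cmp i j \<omega>)}"
  let ?near_min = "{\<omega> \<in> space M. ?g (?out \<omega>) - Min (?g ` ?D) \<le> 2 * U \<delta>}"
  have "U \<delta> \<ge> 0" using assms(3-5) by simp
  have "Min (?g ` ?D) \<in> ?g ` ?D" using \<open>\<Lambda> \<ge> 1\<close> by simp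
  then obtain b where b_min: "Min (?g ` ?D) = L (f b)" and "b \<in> ?D" by (rule imageE)
  have "?good \<subseteq> ?near_min"
  proof
    fix \<omega> assume "\<omega> \<in> ?good"
    then have "\<omega> \<in> space M" and acc: "cmp_accurate ?D ?g (U \<delta>) (\<lambda>i j. cmp i j \<omega>)" by simp_all
    have "\<forall>k\<in>?D. ?g b \<le> ?g k" using b_min[symmetric] by simp
    then have "?g (?out \<omega>) \<le> ?g b + 2 * U \<delta>"
      by (intro atoms_near_min[OF piv_in cmp_out acc \<open>U \<delta> \<ge> 0\<close>]) (use \<open>b \<in> ?D\<close> in auto)
    then show "\<omega> \<in> ?near_min" using \<open>\<omega> \<in> space M\<close> b_min by simp
  qed
  moreover have "?out \<in> M \<rightarrow>\<^sub>M count_space UNIV"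
    by (rule measurable_atoms[OF _ piv_meas piv_in cmp_meas]) (use \<open>\<Lambda> \<ge> 1\<close> in auto)
  then have "?near_min \<in> events" by (rule measurable_sets_Collect) simp
  ultimately have "prob ?good \<le> prob ?near_min" by (rule finite_measure_mono)
  moreover have "1 - real (card ?D) ^ 2 * \<delta> \<le> prob ?good"
    by (rule prob_cmp_accurate_ge) (simp_all add: cmp_meas cmp_guarantee)
  ultimately show ?thesis by simp
qed

end
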